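(* Let $n$ be even, and let $S^{[1]},S^{[2]}\subset\mathbb F_2^n$ be disjoint sets with $\#S^{[1]}+\#S^{[2]}<2^n$. Let $f^*_{[1]}:S^{[1]}\to\mathbb F_2$ and $f^*_{[2]}:S^{[2]}\to\mathbb F_2$ be arbitrary, and define $W:\mathbb F_2^n\to\mathbb Z$ by $W(u)=0$ for $u\notin S^{[1]}\cup S^{[2]}$, $W(u)=(-1)^{f^*_{[1]}(u)}2^{(n+2)/2}$ for $u\in S^{[1]}$, $W(u)=(-1)^{f^*_{[2]}(u)}2^{n/2}$ for $u\in S^{[2]}$. For $i=1,2$ put $X_i(u)=\sum_{\omega\in S^{[i]}}(-1)^{f^*_{[i]}(\omega)\oplus u\cdot\omega}$. Then there exists a Boolean function $f:\mathbb F_2^n\to\mathbb F_2$ with $W_f=W$ if and only if for every $u\in\mathbb F_2^n$ there is $\varepsilon_u\in\{0,1\}$ with $2X_1(u)+X_2(u)=(-1)^{\varepsilon_u}2^{n/2}$.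
   Context: For $f:\mathbb F_2^n\to\mathbb F_2$, $W_f(\omega)=\sum_{x\in\mathbb F_2^n}(-1)^{f(x)\oplus\omega\cdot x}$, where $\omega\cdot x$ is the usual dot product over $\mathbb F_2$. *)

theory Defs
  imports "HOL-Analysis.Analysis"
begin

text \<open>Vectors of F_2^n are modelled as bool^'n (n = CARD('n)); addition in F_2 is (\<noteq>) on bool.\<close>

definition dotF2 :: "bool^'n \<Rightarrow> bool^'n \<Rightarrow> bool" where
  "dotF2 u x = odd (card {i. u $ i \<and> x $ i})"

definition walsh :: "(bool^'n \<Rightarrow> bool) \<Rightarrow> bool^'n \<Rightarrow> int" where
  "walsh f \<omega> = (\<Sum>x\<in>UNIV. (-1::int) ^ of_bool (f x \<noteq> dotF2 \<omega> x))"

definition Xsum :: "(bool^'n) set \<Rightarrow> (bool^'n \<Rightarrow> bool) \<Rightarrow> bool^'n \<Rightarrow> int" where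
  "Xsum S g u = (\<Sum>\<omega>\<in>S. (-1::int) ^ of_bool (g \<omega> \<noteq> dotF2 u \<omega>))"

end

theory Submission
  imports Defs
begin

text \<open>The characters x \<mapsto> (-1)^(\<omega>\<cdot>x) are orthogonal, so W_f = W holds iff the inverse
  transform \<Sum>_\<nu> W(\<nu>) (-1)^(\<nu>\<cdot>x) equals 2^n (-1)^f(x) for every x. For the given W the
  inverse transform is 2^(n/2) (2 X_1(x) + X_2(x)), so a Boolean f with spectrum W exists iff
  2 X_1(x) + X_2(x) = \<plusminus>2^(n/2) everywhere.\<close>

definition walsh_char :: "bool^'n \<Rightarrow> bool^'n \<Rightarrow> int" where
  "walsh_char u x = (-1) ^ of_bool (dotF2 u x)"

definition walsh_inverse :: "(bool^'n \<Rightarrow> int) \<Rightarrow> bool^'n \<Rightarrow> int" where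
  "walsh_inverse W x = (\<Sum>\<nu>\<in>UNIV. W \<nu> * walsh_char \<nu> x)"

lemma dotF2_commute: "dotF2 u x = dotF2 x u"
  unfolding dotF2_def by (simp add: conj_commute)

lemma walsh_char_commute: "walsh_char u x = walsh_char x u"
  by (simp add: walsh_char_def dotF2_commute)

lemma minus_one_power_of_bool_xor:
  "(-1::int) ^ of_bool (a \<noteq> b) = (-1) ^ of_bool a * (-1) ^ of_bool b"
  by auto

lemma walsh_char_prod: "walsh_char u x = (\<Prod>i\<in>UNIV. if u$i \<and> x$i then -1 else 1)"
proof -
  have "walsh_char u x = (-1) ^ card {i. u$i \<and> x$i}"
    by (simp add: walsh_char_def dotF2_def minus_one_power_iff)
  also have "\<dots> = (\<Prod>i\<in>UNIV. if u$i \<and> x$i then -1 else 1)"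
    by (simp add: prod.If_cases)
  finally show ?thesis .
qed

lemma walsh_char_mult: "walsh_char u x * walsh_char v x = walsh_char (\<chi> i. u$i \<noteq> v$i) x"
  unfolding walsh_char_prod prod.distrib[symmetric] by (intro prod.cong) auto

lemma sum_walsh_char_nonzero:
  fixes w :: "bool^'n"
  assumes "w \<noteq> (\<chi> i. False)"
  shows "(\<Sum>x\<in>UNIV. walsh_char w x) = 0"
proof -
  obtain i where "w$i"
    using assms by (auto simp: vec_eq_iff)
  define \<sigma> where "\<sigma> x = (\<chi> j. if j = i then \<not> x$j else x$j)" for x :: "bool^'n"
  have "\<sigma> (\<sigma> x) = x" for x
    unfolding \<sigma>_def by (simp add: vec_eq_iff)
  then have "bij \<sigma>"
    by (metis bijI')
  have split: "walsh_char w y = (if w$i \<and> y$i then -1 else 1) *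
      (\<Prod>j\<in>UNIV-{i}. if w$j \<and> y$j then -1 else 1)" for y
    unfolding walsh_char_prod by (simp add: prod.remove)
  have rest: "(\<Prod>j\<in>UNIV-{i}. if w$j \<and> (\<sigma> x)$j then -1 else 1) =
      (\<Prod>j\<in>UNIV-{i}. if w$j \<and> x$j then -1 else (1::int))" for x
    by (intro prod.cong) (auto simp: \<sigma>_def)
  have flip: "walsh_char w (\<sigma> x) = - walsh_char w x" for x
    using split[of "\<sigma> x"] split[of x] rest[of x] \<open>w$i\<close> by (auto simp: \<sigma>_def)
  have "(\<Sum>x\<in>UNIV. walsh_char w x) = (\<Sum>x\<in>UNIV. walsh_char w (\<sigma> x))"
    using sum.reindex_bij_betw[of \<sigma> UNIV UNIV "walsh_char w"] \<open>bij \<sigma>\<close>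
    by (simp add: bij_betw_def)
  also have "\<dots> = - (\<Sum>x\<in>UNIV. walsh_char w x)"
    by (simp add: flip sum_negf)
  finally show ?thesis by simp
qed

lemma sum_walsh_char:
  fixes w :: "bool^'n"
  shows "(\<Sum>x\<in>UNIV. walsh_char w x) = (if w = (\<chi> i. False) then 2 ^ CARD('n) else 0)"
proof (cases "w = (\<chi> i. False)")
  case True
  then have "walsh_char w x = 1" for x
    by (simp add: walsh_char_prod)
  with True show ?thesis by simp
qed (simp add: sum_walsh_char_nonzero)

lemma walsh_inversion:
  fixes A :: "bool^'n \<Rightarrow> int"
  shows "(\<Sum>x\<in>UNIV. walsh_inverse A x * walsh_char \<omega> x) = 2 ^ CARD('n) * A \<omega>"
proof -
  have xor_zero: "((\<chi> i. \<nu>$i \<noteq> \<omega>$i) = (\<chi> i. False)) = (\<nu> = \<omega>)" for \<nu> :: "bool^'n"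
    by (auto simp: vec_eq_iff)
  have "(\<Sum>x\<in>UNIV. walsh_inverse A x * walsh_char \<omega> x)
      = (\<Sum>x\<in>UNIV. \<Sum>\<nu>\<in>UNIV. A \<nu> * walsh_char (\<chi> i. \<nu>$i \<noteq> \<omega>$i) x)"
    by (simp add: walsh_inverse_def sum_distrib_right mult.assoc walsh_char_mult)
  also have "\<dots> = (\<Sum>\<nu>\<in>UNIV. A \<nu> * (\<Sum>x\<in>UNIV. walsh_char (\<chi> i. \<nu>$i \<noteq> \<omega>$i) x))"
    by (subst sum.swap) (simp add: sum_distrib_left)
  also have "\<dots> = (\<Sum>\<nu>\<in>UNIV. if \<nu> = \<omega> then 2 ^ CARD('n) * A \<nu> else 0)"
    by (intro sum.cong refl) (simp only: sum_walsh_char xor_zero, simp)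
  finally show ?thesis by simp
qed

lemma walsh_eq_walsh_inverse: "walsh f = walsh_inverse (\<lambda>x. (-1) ^ of_bool (f x))"
  by (rule ext) (simp only: walsh_def walsh_inverse_def walsh_char_def dotF2_commute
      minus_one_power_of_bool_xor)

lemma walsh_eq_iff:
  fixes f :: "bool^'n \<Rightarrow> bool"
  shows "walsh f = W \<longleftrightarrow> (\<forall>x. walsh_inverse W x = 2 ^ CARD('n) * (-1) ^ of_bool (f x))"
proof
  assume "walsh f = W"
  then have "walsh_inverse W x = (\<Sum>\<nu>\<in>UNIV. walsh f \<nu> * walsh_char x \<nu>)" for x
    by (simp add: walsh_inverse_def walsh_char_commute)
  then show "\<forall>x. walsh_inverse W x = 2 ^ CARD('n) * (-1) ^ of_bool (f x)"
    by (simp add: walsh_eq_walsh_inverse walsh_inversion)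
next
  assume inv: "\<forall>x. walsh_inverse W x = 2 ^ CARD('n) * (-1) ^ of_bool (f x)"
  have "2 ^ CARD('n) * walsh f \<omega> = 2 ^ CARD('n) * W \<omega>" for \<omega>
  proof -
    have "2 ^ CARD('n) * walsh f \<omega>
        = (\<Sum>x\<in>UNIV. 2 ^ CARD('n) * (-1) ^ of_bool (f x) * walsh_char x \<omega>)"
      by (simp add: walsh_eq_walsh_inverse walsh_inverse_def sum_distrib_left mult.assoc)
    also have "\<dots> = (\<Sum>x\<in>UNIV. walsh_inverse W x * walsh_char \<omega> x)"
      by (simp add: inv walsh_char_commute)
    also have "\<dots> = 2 ^ CARD('n) * W \<omega>"
      by (rule walsh_inversion)
    finally show ?thesis .
  qed
  then show "walsh f = W"
    by (simp add: fun_eq_iff)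
qed

lemma walsh_inverse_linear:
  "walsh_inverse (\<lambda>\<nu>. a * A \<nu> + b * B \<nu>) x = a * walsh_inverse A x + b * walsh_inverse B x"
  by (simp add: walsh_inverse_def sum.distrib sum_distrib_left algebra_simps)

lemma walsh_inverse_signs_on:
  "walsh_inverse (\<lambda>\<nu>. if \<nu> \<in> S then (-1) ^ of_bool (g \<nu>) else 0) x = Xsum S g x"
proof -
  have "walsh_inverse (\<lambda>\<nu>. if \<nu> \<in> S then (-1) ^ of_bool (g \<nu>) else 0) x
      = (\<Sum>\<nu>\<in>UNIV \<inter> S. (-1) ^ of_bool (g \<nu>) * walsh_char \<nu> x)"
    unfolding walsh_inverse_def sum.inter_restrict[OF finite]
    by (intro sum.cong) auto
  then show ?thesis
    unfolding Xsum_def walsh_char_def minus_one_power_of_bool_xor by (simp add: dotF2_commute)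
qed

lemma ex_sign_function_iff:
  fixes Y :: "'a \<Rightarrow> int"
  shows "(\<exists>f. \<forall>x. Y x = (-1) ^ of_bool (f x) * c) \<longleftrightarrow>
         (\<forall>x. \<exists>\<epsilon>::nat \<in> {0,1}. Y x = (-1) ^ \<epsilon> * c)"
proof
  assume "\<forall>x. \<exists>\<epsilon>::nat \<in> {0,1}. Y x = (-1) ^ \<epsilon> * c"
  then have "\<forall>x. \<exists>b. Y x = (-1) ^ of_bool b * c"
    by (metis insert_iff of_bool_eq(1,2) singletonD)
  then show "\<exists>f. \<forall>x. Y x = (-1) ^ of_bool (f x) * c"
    by metis
qed (metis insertI1 insertI2 of_bool_def singletonI)

theorem mainTheorem2:
  fixes S1 S2 :: "(bool^'n) set" and g1 g2 :: "bool^'n \<Rightarrow> bool" and W :: "bool^'n \<Rightarrow> int"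
  assumes "even CARD('n)"
    and "S1 \<inter> S2 = {}"
    and "card S1 + card S2 < 2 ^ CARD('n)"
    and "\<And>u. W u = (if u \<in> S1 then (-1) ^ of_bool (g1 u) * 2 ^ ((CARD('n) + 2) div 2)
                    else if u \<in> S2 then (-1) ^ of_bool (g2 u) * 2 ^ (CARD('n) div 2)
                    else 0)"
  shows "(\<exists>f :: bool^'n \<Rightarrow> bool. walsh f = W) \<longleftrightarrow>
         (\<forall>u. \<exists>\<epsilon>::nat \<in> {0,1}. 2 * Xsum S1 g1 u + Xsum S2 g2 u = (-1) ^ \<epsilon> * 2 ^ (CARD('n) div 2))"
proof -
  define h where "h = CARD('n) div 2"
  have card_split: "(2::int) ^ CARD('n) = 2 ^ h * 2 ^ h"
    using assms(1) unfolding h_def by (metis dvd_mult_div_cancel mult_2 power_add)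
  have "W = (\<lambda>\<nu>. (2 * 2 ^ h) * (if \<nu> \<in> S1 then (-1) ^ of_bool (g1 \<nu>) else 0)
                 + 2 ^ h * (if \<nu> \<in> S2 then (-1) ^ of_bool (g2 \<nu>) else 0))"
    using assms(2,4) unfolding h_def by fastforce
  then have "walsh_inverse W x = 2 ^ h * (2 * Xsum S1 g1 x + Xsum S2 g2 x)" for x
    by (simp only: walsh_inverse_linear walsh_inverse_signs_on) (simp add: algebra_simps)
  moreover have "2 ^ h * y = 2 ^ CARD('n) * s \<longleftrightarrow> y = s * 2 ^ h" for y s :: int
    by (simp add: card_split mult.commute mult.left_commute)
  ultimately have "walsh f = W \<longleftrightarrow>
      (\<forall>x. 2 * Xsum S1 g1 x + Xsum S2 g2 x = (-1) ^ of_bool (f x) * 2 ^ h)" for f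
    by (simp add: walsh_eq_iff)
  then show ?thesis
    by (simp add: ex_sign_function_iff h_def)
qed

end
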